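(* Let $X$ be a regular Hausdorff space. If $X$ contains a closed subspace homeomorphic to the sequential fan $S_\omega$, then $\mathcal{F}_2(X)$ contains a closed subspace homeomorphic to the Arens space $S_2$.
   Context: $\mathcal{F}_2(X)$ is the set of nonempty subsets of $X$ of cardinality at most 2, with the Vietoris topology (base: $\langle U_1,\dots,U_k\rangle=\{A: A\subset\bigcup_i U_i,\ A\cap U_j\neq\emptyset\ \forall j\}$, $U_i$ open in $X$). The sequential fan $S_\omega$ is obtained from the topological sum of countably many convergent sequences $T_n\cup\{x_n\}$ ($T_n$ a sequence converging to $x_n$), $n\in\omega$, by identifying all limit points $x_n$ to a single point. The Arens space $S_2$ is the set $\{\infty\}\cup\{x_n:n\in\mathbb{N}\}\cup\{x_{n,m}: n,m\}$ where each $x_{n,m}$ is isolated, basic neighborhoods of $x_n$ are $\{x_n\}\cup\{x_{n,m}: m>k\}$, and basic neighborhoods of $\infty$ are $\{\infty\}\cup\bigcup_{n>k}V_n$ with $V_n$ a neighborhood of $x_n$. *)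

theory Defs
  imports "HOL-Analysis.Analysis"
begin

definition F2_set :: "'a topology \<Rightarrow> 'a set set" where
  "F2_set X = {A. A \<noteq> {} \<and> A \<subseteq> topspace X \<and> finite A \<and> card A \<le> 2}"

definition vietoris_box :: "'a topology \<Rightarrow> 'a set list \<Rightarrow> 'a set set" where
  "vietoris_box X Us = {A \<in> F2_set X. A \<subseteq> \<Union>(set Us) \<and> (\<forall>U \<in> set Us. A \<inter> U \<noteq> {})}"

definition F2_topology :: "'a topology \<Rightarrow> 'a set topology" where
  "F2_topology X = topology_generated_by
     {vietoris_box X Us | Us. \<forall>U \<in> set Us. openin X U}"

text \<open>Vertex is the identified limit point; FPt n m is the m-th term of the n-th sequence.\<close>
datatype fan_pt = Vertex | FPt nat nat

definition seq_fan :: "fan_pt topology" where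
  "seq_fan = topology_generated_by
     ({{FPt n m} | n m. True} \<union>
      {insert Vertex {FPt n m | n m. f n \<le> m} | f. True})"

text \<open>AInf is the point infinity, APt n is x_n, APt2 n m is x_{n,m}.\<close>
datatype arens_pt = AInf | APt nat | APt2 nat nat

definition arens_nbhd :: "nat \<Rightarrow> nat \<Rightarrow> arens_pt set" where
  "arens_nbhd n k = insert (APt n) {APt2 n m | m. m > k}"

definition arens_space :: "arens_pt topology" where
  "arens_space = topology_generated_by
     ({{APt2 n m} | n m. True} \<union>
      {arens_nbhd n k | n k. True} \<union>
      {insert AInf (\<Union>n \<in> {n. n > k}. arens_nbhd n (g n)) | k g. True})"

end

theory Submission
  imports Defs
begin

(* Write a_n for the n-th point of the zeroth sequence of the fan S_omega, b_(n,m) for the m-th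
   point of the (n+1)-st sequence and v for the vertex. The map sending infinity to {v}, x_n to
   {v, a_n} and x_(n,m) to {a_n, b_(n,m)} is a closed embedding of S_2 into F_2(S_omega): as
   m grows, {a_n, b_(n,m)} tends to {a_n, v}, and as n grows {v, a_n} tends to {v}, exactly as
   the Arens topology demands, while every other point of F_2(S_omega) is cut off from the image
   by a Vietoris box. Since F_2 is functorial and carries closed subspaces to closed subspaces,
   a closed copy of S_omega in X yields a closed copy of S_2 in F_2(X). *)

lemma topspace_F2_topology [simp]: "topspace (F2_topology X) = F2_set X"
proof -
  let ?\<B> = "{vietoris_box X Us | Us. \<forall>U \<in> set Us. openin X U}"
  have "vietoris_box X [topspace X] \<in> ?\<B>"
    by fastforce
  moreover have "F2_set X = vietoris_box X [topspace X]"
    by (auto simp: vietoris_box_def F2_set_def)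
  ultimately have "F2_set X \<subseteq> \<Union> ?\<B>"
    by blast
  moreover have "\<Union> ?\<B> \<subseteq> F2_set X"
    by (auto simp: vietoris_box_def)
  ultimately show ?thesis
    unfolding F2_topology_def topology_generated_by_topspace by blast
qed

lemma openin_vietoris_box:
  "(\<And>U. U \<in> set Us \<Longrightarrow> openin X U) \<Longrightarrow> openin (F2_topology X) (vietoris_box X Us)"
  unfolding F2_topology_def by (rule topology_generated_by_Basis) blast

lemma openin_F2_subset:
  assumes "openin X U"
  shows "openin (F2_topology X) {A \<in> F2_set X. A \<subseteq> U}"
proof -
  have "{A \<in> F2_set X. A \<subseteq> U} = vietoris_box X [U]"
    by (auto simp: vietoris_box_def F2_set_def)
  then show ?thesis
    using openin_vietoris_box[of "[U]"] assms by simp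
qed

lemma openin_F2_meets:
  assumes "openin X U"
  shows "openin (F2_topology X) {A \<in> F2_set X. A \<inter> U \<noteq> {}}"
proof -
  have "{A \<in> F2_set X. A \<inter> U \<noteq> {}} = vietoris_box X [topspace X, U]"
    by (auto simp: vietoris_box_def F2_set_def)
  then show ?thesis
    using openin_vietoris_box[of "[topspace X, U]"] assms by auto
qed

lemma continuous_map_into_F2_topology:
  assumes "\<And>y. y \<in> topspace Y \<Longrightarrow> f y \<in> F2_set X"
    and "\<And>U. openin X U \<Longrightarrow> openin Y {y \<in> topspace Y. f y \<subseteq> U}"
    and "\<And>U. openin X U \<Longrightarrow> openin Y {y \<in> topspace Y. f y \<inter> U \<noteq> {}}"
  shows "continuous_map Y (F2_topology X) f"
  unfolding F2_topology_def
proof (rule continuous_on_generated_topo)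
  fix B assume "B \<in> {vietoris_box X Us | Us. \<forall>U \<in> set Us. openin X U}"
  then obtain Us where B: "B = vietoris_box X Us" and Us: "\<forall>U \<in> set Us. openin X U"
    by blast
  have "f -` B \<inter> topspace Y = {y \<in> topspace Y. f y \<subseteq> \<Union>(set Us)} \<inter>
          \<Inter> ((\<lambda>U. {y \<in> topspace Y. f y \<inter> U \<noteq> {}}) ` set Us)"
    using assms(1) by (auto simp: B vietoris_box_def)
  moreover have "openin Y ({y \<in> topspace Y. f y \<subseteq> \<Union>(set Us)} \<inter>
                    \<Inter> ((\<lambda>U. {y \<in> topspace Y. f y \<inter> U \<noteq> {}}) ` set Us))"
  proof (rule openin_Int_Inter)
    show "openin Y {y \<in> topspace Y. f y \<subseteq> \<Union>(set Us)}"
      using Us by (intro assms(2) openin_Union) auto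
  qed (use Us assms(3) in auto)
  ultimately show "openin Y (f -` B \<inter> topspace Y)"
    by simp
next
  have "f y \<in> vietoris_box X [topspace X]" if "y \<in> topspace Y" for y
    using assms(1)[OF that] by (auto simp: vietoris_box_def F2_set_def)
  moreover have "vietoris_box X [topspace X] \<in> {vietoris_box X Us | Us. \<forall>U \<in> set Us. openin X U}"
    by fastforce
  ultimately show "f ` topspace Y \<subseteq> \<Union> {vietoris_box X Us | Us. \<forall>U \<in> set Us. openin X U}"
    by blast
qed

lemma continuous_map_F2_topology:
  assumes h: "continuous_map Y X h"
  shows "continuous_map (F2_topology Y) (F2_topology X) (image h)"
proof (rule continuous_map_into_F2_topology)
  fix A assume "A \<in> topspace (F2_topology Y)"
  then have A: "A \<noteq> {}" "A \<subseteq> topspace Y" "finite A" "card A \<le> 2"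
    by (auto simp: F2_set_def)
  have "h ` A \<subseteq> topspace X"
    using A(2) continuous_map_image_subset_topspace[OF h] by blast
  then show "h ` A \<in> F2_set X"
    using A card_image_le[OF A(3), of h] by (simp add: F2_set_def)
next
  fix U assume "openin X U"
  then have V: "openin Y {y \<in> topspace Y. h y \<in> U}"
    using h openin_continuous_map_preimage by blast
  have "{A \<in> topspace (F2_topology Y). h ` A \<subseteq> U}
          = {A \<in> F2_set Y. A \<subseteq> {y \<in> topspace Y. h y \<in> U}}"
    by (auto simp: F2_set_def)
  then show "openin (F2_topology Y) {A \<in> topspace (F2_topology Y). h ` A \<subseteq> U}"
    using openin_F2_subset[OF V] by simp
  have "{A \<in> topspace (F2_topology Y). h ` A \<inter> U \<noteq> {}}
          = {A \<in> F2_set Y. A \<inter> {y \<in> topspace Y. h y \<in> U} \<noteq> {}}"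
    by (auto simp: F2_set_def)
  then show "openin (F2_topology Y) {A \<in> topspace (F2_topology Y). h ` A \<inter> U \<noteq> {}}"
    using openin_F2_meets[OF V] by simp
qed

lemma homeomorphic_map_F2_topology:
  assumes "homeomorphic_map Y X h"
  shows "homeomorphic_map (F2_topology Y) (F2_topology X) (image h)"
proof -
  obtain k where hk: "homeomorphic_maps Y X h k"
    using assms homeomorphic_map_maps by blast
  have kh: "k (h x) = x" if "x \<in> topspace Y" for x
    using hk that by (simp add: homeomorphic_maps_def)
  have hk': "h (k y) = y" if "y \<in> topspace X" for y
    using hk that by (simp add: homeomorphic_maps_def)
  have "k ` h ` A = A" if "A \<subseteq> topspace Y" for A
    using that kh by (force simp: image_image)
  moreover have "h ` k ` A = A" if "A \<subseteq> topspace X" for A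
    using that hk' by (force simp: image_image)
  ultimately have "homeomorphic_maps (F2_topology Y) (F2_topology X) (image h) (image k)"
    using hk by (auto simp: homeomorphic_maps_def continuous_map_F2_topology F2_set_def)
  then show ?thesis
    using homeomorphic_map_maps by blast
qed

lemma F2_topology_subtopology:
  "F2_topology (subtopology X S) = subtopology (F2_topology X) (F2_set (subtopology X S))"
proof -
  let ?F = "subtopology (F2_topology X) (F2_set (subtopology X S))"
  have "continuous_map (F2_topology (subtopology X S)) (F2_topology X) id"
    using continuous_map_F2_topology[of "subtopology X S" X id]
    by (simp add: continuous_map_from_subtopology)
  then have to_sub: "continuous_map (F2_topology (subtopology X S)) ?F id"
    by (simp add: continuous_map_in_subtopology)
  have from_sub: "continuous_map ?F (F2_topology (subtopology X S)) id"
  proof (rule continuous_map_into_F2_topology)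
    fix U assume "openin (subtopology X S) U"
    then obtain U' where U': "openin X U'" "U = U' \<inter> S"
      by (auto simp: openin_subtopology)
    have "{A \<in> topspace ?F. id A \<subseteq> U} = F2_set (subtopology X S) \<inter> {A \<in> F2_set X. A \<subseteq> U'}"
      using U'(2) by (auto simp: F2_set_def)
    then show "openin ?F {A \<in> topspace ?F. id A \<subseteq> U}"
      using openin_subtopology_Int2[OF openin_F2_subset[OF U'(1)]] by simp
    have "{A \<in> topspace ?F. id A \<inter> U \<noteq> {}}
            = F2_set (subtopology X S) \<inter> {A \<in> F2_set X. A \<inter> U' \<noteq> {}}"
      using U'(2) by (auto simp: F2_set_def)
    then show "openin ?F {A \<in> topspace ?F. id A \<inter> U \<noteq> {}}"
      using openin_subtopology_Int2[OF openin_F2_meets[OF U'(1)]] by simp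
  qed (auto simp: F2_set_def)
  have "homeomorphic_maps (F2_topology (subtopology X S)) ?F id id"
    using to_sub from_sub by (simp add: homeomorphic_maps_def)
  then show ?thesis
    using homeomorphic_map_id homeomorphic_map_maps by metis
qed

lemma closedin_F2_set_subtopology:
  assumes "closedin X S"
  shows "closedin (F2_topology X) (F2_set (subtopology X S))"
proof -
  have "F2_set X - F2_set (subtopology X S) = {A \<in> F2_set X. A \<inter> (topspace X - S) \<noteq> {}}"
    by (auto simp: F2_set_def)
  moreover have "F2_set (subtopology X S) \<subseteq> F2_set X"
    by (auto simp: F2_set_def)
  ultimately show ?thesis
    using openin_F2_meets[of X "topspace X - S"] assms by (simp add: closedin_def)
qed

lemma closed_subspace_F2_topology_transfer:
  assumes "closedin X S" and "subtopology X S homeomorphic_space Y"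
    and "closedin (F2_topology Y) T"
  shows "\<exists>T'. closedin (F2_topology X) T' \<and>
              subtopology (F2_topology X) T' homeomorphic_space subtopology (F2_topology Y) T"
proof -
  obtain h where h: "homeomorphic_map Y (subtopology X S) h"
    using assms(2) homeomorphic_space_sym homeomorphic_space by blast
  have F2h: "homeomorphic_map (F2_topology Y)
               (subtopology (F2_topology X) (F2_set (subtopology X S))) (image h)"
    using homeomorphic_map_F2_topology[OF h] by (simp add: F2_topology_subtopology)
  have T: "T \<subseteq> topspace (F2_topology Y)"
    using assms(3) closedin_subset by blast
  have "closedin (subtopology (F2_topology X) (F2_set (subtopology X S))) (image h ` T)"
    using F2h assms(3) homeomorphic_map_closedness_eq by blast
  then have "closedin (F2_topology X) (image h ` T)"
    using closedin_trans_full closedin_F2_set_subtopology[OF assms(1)] by blast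
  moreover have "homeomorphic_map (subtopology (F2_topology Y) T)
                   (subtopology (F2_topology X) (image h ` T)) (image h)"
  proof -
    have hT: "image h ` T \<subseteq> F2_set (subtopology X S)"
      using T homeomorphic_imp_surjective_map[OF F2h] by auto
    then have "image h ` (topspace (F2_topology Y) \<inter> T)
                 = topspace (subtopology (F2_topology X) (F2_set (subtopology X S))) \<inter> image h ` T"
      using T homeomorphic_imp_surjective_map[OF F2h] by auto
    from homeomorphic_map_subtopologies[OF F2h this] hT show ?thesis
      by (simp add: subtopology_subtopology Int_absorb1)
  qed
  ultimately show ?thesis
    using homeomorphic_map_imp_homeomorphic_space homeomorphic_space_sym by blast
qed

definition fan_tail :: "(nat \<Rightarrow> nat) \<Rightarrow> fan_pt set" where
  "fan_tail f = insert Vertex {FPt n m | n m. f n \<le> m}"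

lemma openin_fan_tail: "openin seq_fan (fan_tail f)"
  unfolding seq_fan_def fan_tail_def by (rule topology_generated_by_Basis) blast

lemma openin_fan_singleton: "openin seq_fan {FPt n m}"
  unfolding seq_fan_def by (rule topology_generated_by_Basis) blast

lemma topspace_seq_fan [simp]: "topspace seq_fan = UNIV"
proof -
  have "x \<in> topspace seq_fan" for x
  proof (cases x)
    case Vertex
    then show ?thesis
      using openin_subset[OF openin_fan_tail] by (auto simp: fan_tail_def)
  next
    case (FPt n m)
    then show ?thesis
      using openin_subset[OF openin_fan_singleton] by blast
  qed
  then show ?thesis
    by blast
qed

lemma fan_tail_subset_nbhd:
  assumes "openin seq_fan W" "Vertex \<in> W"
  obtains f where "fan_tail f \<subseteq> W"
proof -
  have "generate_topology_on ({{FPt n m} | n m. True} \<union>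
      {insert Vertex {FPt n m | n m. f n \<le> m} | f. True}) W"
    using assms(1) unfolding seq_fan_def by (rule openin_topology_generated_by)
  then have "Vertex \<in> W \<longrightarrow> (\<exists>f. fan_tail f \<subseteq> W)"
  proof induction
    case (Int a b)
    show ?case
    proof
      assume "Vertex \<in> a \<inter> b"
      then obtain f g where "fan_tail f \<subseteq> a" "fan_tail g \<subseteq> b"
        using Int by blast
      moreover have "fan_tail (\<lambda>i. max (f i) (g i)) \<subseteq> fan_tail f \<inter> fan_tail g"
        unfolding fan_tail_def by auto
      ultimately show "\<exists>f. fan_tail f \<subseteq> a \<inter> b"
        by blast
    qed
  next
    case (UN K)
    then show ?case
      by blast
  qed (auto simp: fan_tail_def)
  then show ?thesis
    using assms(2) that by blast
qed

definition arens_basis :: "arens_pt set set" where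
  "arens_basis = {{APt2 n m} | n m. True} \<union> {arens_nbhd n k | n k. True} \<union>
     {insert AInf (\<Union>n \<in> {n. n > k}. arens_nbhd n (g n)) | k g. True}"

lemma arens_space_eq: "arens_space = topology_generated_by arens_basis"
  unfolding arens_space_def arens_basis_def ..

lemma openin_arens_spaceI:
  assumes "\<And>n. APt n \<in> V \<Longrightarrow> \<exists>k. \<forall>m>k. APt2 n m \<in> V"
    and "AInf \<in> V \<Longrightarrow> \<exists>k g. \<forall>n>k. APt n \<in> V \<and> (\<forall>m>g n. APt2 n m \<in> V)"
  shows "openin arens_space V"
proof -
  have "\<exists>B \<in> arens_basis. x \<in> B \<and> B \<subseteq> V" if x: "x \<in> V" for x
  proof (cases x)
    case AInf
    then obtain k g where kg: "\<forall>n>k. APt n \<in> V \<and> (\<forall>m>g n. APt2 n m \<in> V)"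
      using assms(2) x by blast
    have "insert AInf (\<Union>n \<in> {n. n > k}. arens_nbhd n (g n)) \<in> arens_basis"
      unfolding arens_basis_def by blast
    moreover have "insert AInf (\<Union>n \<in> {n. n > k}. arens_nbhd n (g n)) \<subseteq> V"
      using kg x AInf by (auto simp: arens_nbhd_def)
    ultimately show ?thesis
      using AInf by blast
  next
    case (APt n)
    then obtain k where k: "\<forall>m>k. APt2 n m \<in> V"
      using assms(1) x by blast
    have "arens_nbhd n k \<in> arens_basis"
      unfolding arens_basis_def by blast
    moreover have "arens_nbhd n k \<subseteq> V" "x \<in> arens_nbhd n k"
      using k x APt by (auto simp: arens_nbhd_def)
    ultimately show ?thesis
      by blast
  next
    case (APt2 n m)
    have "{APt2 n m} \<in> arens_basis"
      unfolding arens_basis_def by blast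
    then show ?thesis
      using APt2 x by blast
  qed
  then have "V = \<Union>{B \<in> arens_basis. B \<subseteq> V}"
    by blast
  moreover have "openin arens_space (\<Union>{B \<in> arens_basis. B \<subseteq> V})"
    unfolding arens_space_eq by (auto intro: topology_generated_by_Basis)
  ultimately show ?thesis
    by simp
qed

lemma topspace_arens_space [simp]: "topspace arens_space = UNIV"
  using openin_subset[of arens_space UNIV] by (auto intro: openin_arens_spaceI)

fun arens_to_F2 :: "arens_pt \<Rightarrow> fan_pt set" where
  "arens_to_F2 AInf = {Vertex}"
| "arens_to_F2 (APt n) = {Vertex, FPt 0 n}"
| "arens_to_F2 (APt2 n m) = {FPt 0 n, FPt (Suc n) m}"

lemma inj_arens_to_F2: "inj arens_to_F2"
proof (rule injI)
  fix a b assume "arens_to_F2 a = arens_to_F2 b"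
  then show "a = b"
    by (cases a; cases b) (auto simp: doubleton_eq_iff)
qed

lemma arens_to_F2_in_F2_set: "arens_to_F2 a \<in> F2_set seq_fan"
  by (cases a) (auto simp: F2_set_def card_insert_if)

lemma fan_tail_subsetD:
  assumes "fan_tail f \<subseteq> W"
  shows "Vertex \<in> W" and "f n \<le> m \<Longrightarrow> FPt n m \<in> W"
  using assms by (auto simp: fan_tail_def)

lemma openin_arens_to_F2_subset:
  assumes W: "openin seq_fan W"
  shows "openin arens_space {a. arens_to_F2 a \<subseteq> W}"
proof (rule openin_arens_spaceI)
  fix n assume "APt n \<in> {a. arens_to_F2 a \<subseteq> W}"
  then have "Vertex \<in> W" "FPt 0 n \<in> W"
    by auto
  then obtain f where "fan_tail f \<subseteq> W"
    using fan_tail_subset_nbhd W by blast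
  then have "APt2 n m \<in> {a. arens_to_F2 a \<subseteq> W}" if "m > f (Suc n)" for m
    using \<open>FPt 0 n \<in> W\<close> fan_tail_subsetD(2)[of f W "Suc n" m] that by simp
  then show "\<exists>k. \<forall>m>k. APt2 n m \<in> {a. arens_to_F2 a \<subseteq> W}"
    by blast
next
  assume "AInf \<in> {a. arens_to_F2 a \<subseteq> W}"
  then have "Vertex \<in> W"
    by simp
  then obtain f where f: "fan_tail f \<subseteq> W"
    using fan_tail_subset_nbhd W by blast
  have "\<forall>n > f 0. APt n \<in> {a. arens_to_F2 a \<subseteq> W} \<and>
           (\<forall>m > f (Suc n). APt2 n m \<in> {a. arens_to_F2 a \<subseteq> W})"
    using fan_tail_subsetD[OF f] by simp
  then show "\<exists>k g. \<forall>n>k. APt n \<in> {a. arens_to_F2 a \<subseteq> W} \<and>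
               (\<forall>m>g n. APt2 n m \<in> {a. arens_to_F2 a \<subseteq> W})"
    by (intro exI[of _ "f 0"] exI[of _ "\<lambda>n. f (Suc n)"])
qed

lemma openin_arens_to_F2_meets:
  assumes W: "openin seq_fan W"
  shows "openin arens_space {a. arens_to_F2 a \<inter> W \<noteq> {}}"
proof (rule openin_arens_spaceI)
  fix n assume "APt n \<in> {a. arens_to_F2 a \<inter> W \<noteq> {}}"
  then consider "Vertex \<in> W" | "FPt 0 n \<in> W"
    by auto
  then show "\<exists>k. \<forall>m>k. APt2 n m \<in> {a. arens_to_F2 a \<inter> W \<noteq> {}}"
  proof cases
    case 1
    then obtain f where "fan_tail f \<subseteq> W"
      using fan_tail_subset_nbhd W by blast
    then have "APt2 n m \<in> {a. arens_to_F2 a \<inter> W \<noteq> {}}" if "m > f (Suc n)" for m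
      using fan_tail_subsetD(2)[of f W "Suc n" m] that by auto
    then show ?thesis
      by blast
  qed auto
next
  assume "AInf \<in> {a. arens_to_F2 a \<inter> W \<noteq> {}}"
  then have "Vertex \<in> W"
    by simp
  then obtain f where f: "fan_tail f \<subseteq> W"
    using fan_tail_subset_nbhd W by blast
  have "\<forall>n > f 0. APt n \<in> {a. arens_to_F2 a \<inter> W \<noteq> {}} \<and>
           (\<forall>m > 0. APt2 n m \<in> {a. arens_to_F2 a \<inter> W \<noteq> {}})"
    using fan_tail_subsetD[OF f] by auto
  then show "\<exists>k g. \<forall>n>k. APt n \<in> {a. arens_to_F2 a \<inter> W \<noteq> {}} \<and>
               (\<forall>m>g n. APt2 n m \<in> {a. arens_to_F2 a \<inter> W \<noteq> {}})"
    by (intro exI[of _ "f 0"] exI[of _ "\<lambda>_. 0"])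
qed

lemma continuous_map_arens_to_F2: "continuous_map arens_space (F2_topology seq_fan) arens_to_F2"
  by (rule continuous_map_into_F2_topology)
     (simp_all add: arens_to_F2_in_F2_set openin_arens_to_F2_subset openin_arens_to_F2_meets)

lemma arens_basis_vimage_vietoris_box:
  assumes "B \<in> arens_basis"
  obtains Vs where "\<forall>V \<in> set Vs. openin seq_fan V"
    and "B = arens_to_F2 -` vietoris_box seq_fan Vs"
proof -
  consider (point) n m where "B = {APt2 n m}"
    | (spine) n k where "B = arens_nbhd n k"
    | (vertex) k g where "B = insert AInf (\<Union>n \<in> {n. n > k}. arens_nbhd n (g n))"
    using assms unfolding arens_basis_def by blast
  then show ?thesis
  proof cases
    case point
    let ?Vs = "[{FPt 0 n}, {FPt (Suc n) m}]"
    have "arens_to_F2 a \<in> vietoris_box seq_fan ?Vs \<longleftrightarrow> a \<in> B" for a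
      using arens_to_F2_in_F2_set[of a]
      by (cases a) (auto simp: point vietoris_box_def)
    then show ?thesis
      using that[of ?Vs] openin_fan_singleton by auto
  next
    case spine
    let ?Vs = "[fan_tail (\<lambda>_. Suc k), {FPt 0 n}]"
    have "arens_to_F2 a \<in> vietoris_box seq_fan ?Vs \<longleftrightarrow> a \<in> B" for a
      using arens_to_F2_in_F2_set[of a]
      by (cases a) (auto simp: spine vietoris_box_def fan_tail_def arens_nbhd_def)
    then show ?thesis
      using that[of ?Vs] openin_fan_singleton openin_fan_tail by auto
  next
    case vertex
    let ?Vs = "[fan_tail (case_nat (Suc k) (\<lambda>j. Suc (g j)))]"
    have "arens_to_F2 a \<in> vietoris_box seq_fan ?Vs \<longleftrightarrow> a \<in> B" for a
      using arens_to_F2_in_F2_set[of a]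
      by (cases a) (auto simp: vertex vietoris_box_def fan_tail_def arens_nbhd_def)
    then show ?thesis
      using that[of ?Vs] openin_fan_tail by auto
  qed
qed

lemma homeomorphic_map_arens_to_F2:
  "homeomorphic_map arens_space (subtopology (F2_topology seq_fan) (range arens_to_F2)) arens_to_F2"
proof -
  let ?T = "subtopology (F2_topology seq_fan) (range arens_to_F2)"
  have topspace_T: "topspace ?T = range arens_to_F2"
    using arens_to_F2_in_F2_set by auto
  have "continuous_map ?T arens_space (inv arens_to_F2)"
    unfolding arens_space_eq
  proof (rule continuous_on_generated_topo)
    fix B assume "B \<in> arens_basis"
    then obtain Vs where Vs: "\<forall>V \<in> set Vs. openin seq_fan V"
      and B: "B = arens_to_F2 -` vietoris_box seq_fan Vs"
      by (rule arens_basis_vimage_vietoris_box)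
    have "inv arens_to_F2 -` B \<inter> topspace ?T = range arens_to_F2 \<inter> vietoris_box seq_fan Vs"
      using inj_arens_to_F2 arens_to_F2_in_F2_set by (auto simp: topspace_T B)
    then show "openin ?T (inv arens_to_F2 -` B \<inter> topspace ?T)"
      using openin_subtopology_Int2 openin_vietoris_box Vs by metis
  next
    show "inv arens_to_F2 ` topspace ?T \<subseteq> \<Union> arens_basis"
      using topspace_arens_space by (simp add: arens_space_eq)
  qed
  moreover have "continuous_map arens_space ?T arens_to_F2"
    using continuous_map_arens_to_F2 by (simp add: continuous_map_in_subtopology)
  ultimately have "homeomorphic_maps arens_space ?T arens_to_F2 (inv arens_to_F2)"
    using inj_arens_to_F2 by (auto simp: homeomorphic_maps_def topspace_T)
  then show ?thesis
    using homeomorphic_map_maps by blast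
qed

lemma vietoris_box_avoiding_range_arens_to_F2:
  assumes "B \<in> F2_set seq_fan" "B \<notin> range arens_to_F2"
  obtains Vs where "\<forall>V \<in> set Vs. openin seq_fan V" "B \<in> vietoris_box seq_fan Vs"
    "vietoris_box seq_fan Vs \<inter> range arens_to_F2 = {}"
proof (cases "Vertex \<in> B")
  case False
  obtain xs where xs: "set xs = B"
    using assms(1) finite_list by (auto simp: F2_set_def)
  let ?Vs = "map (\<lambda>x. {x}) xs"
  have "openin seq_fan {x}" if "x \<in> B" for x
    using False that openin_fan_singleton by (cases x) auto
  then have "\<forall>V \<in> set ?Vs. openin seq_fan V"
    using xs by auto
  moreover have "vietoris_box seq_fan ?Vs = {B}"
    using xs assms(1) unfolding vietoris_box_def by auto
  ultimately show ?thesis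
    using assms(2) by (intro that[of ?Vs]) auto
next
  case True
  have "finite B" "card (B - {Vertex}) \<le> Suc 0"
    using assms(1) True by (auto simp: F2_set_def card_Diff_singleton)
  moreover have "B \<noteq> {Vertex}"
    using assms(2) arens_to_F2.simps(1) by (metis rangeI)
  then obtain y where y: "y \<in> B" "y \<noteq> Vertex"
    using True by blast
  ultimately have "B - {Vertex} = {y}"
    using card_le_Suc0_iff_eq[of "B - {Vertex}"] by blast
  then have B: "B = {Vertex, y}"
    using True by blast
  obtain k j where y: "y = FPt k j"
    using y(2) by (cases y) auto
  have "B \<noteq> arens_to_F2 (APt j)"
    using assms(2) by blast
  then obtain i where "k = Suc i"
    using B y by (cases k) auto
  then have y: "y = FPt (Suc i) j"
    using y by simp
  \<comment> \<open>The tail misses FPt 0 i, the only partner of FPt (Suc i) j in an image pair.\<close>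
  let ?Vs = "[fan_tail (\<lambda>_. Suc i), {FPt (Suc i) j}]"
  have "\<forall>V \<in> set ?Vs. openin seq_fan V"
    using openin_fan_tail openin_fan_singleton by simp
  moreover have "B \<in> vietoris_box seq_fan ?Vs"
    using assms(1) by (simp add: vietoris_box_def fan_tail_def B y)
  moreover have "arens_to_F2 a \<notin> vietoris_box seq_fan ?Vs" for a
    by (cases a) (simp_all add: vietoris_box_def fan_tail_def)
  ultimately show ?thesis
    using that by blast
qed

lemma closedin_range_arens_to_F2: "closedin (F2_topology seq_fan) (range arens_to_F2)"
  unfolding closedin_def
proof (intro conjI openin_subopen[THEN iffD2] ballI)
  show "range arens_to_F2 \<subseteq> topspace (F2_topology seq_fan)"
    using arens_to_F2_in_F2_set by auto
next
  fix B assume "B \<in> topspace (F2_topology seq_fan) - range arens_to_F2"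
  then obtain Vs where Vs: "\<forall>V \<in> set Vs. openin seq_fan V" "B \<in> vietoris_box seq_fan Vs"
      "vietoris_box seq_fan Vs \<inter> range arens_to_F2 = {}"
    using vietoris_box_avoiding_range_arens_to_F2 by auto
  moreover have "openin (F2_topology seq_fan) (vietoris_box seq_fan Vs)"
    using Vs(1) by (simp add: openin_vietoris_box)
  moreover have "vietoris_box seq_fan Vs \<subseteq> F2_set seq_fan"
    by (auto simp: vietoris_box_def)
  ultimately show "\<exists>W. openin (F2_topology seq_fan) W \<and> B \<in> W \<and>
                     W \<subseteq> topspace (F2_topology seq_fan) - range arens_to_F2"
    by (intro exI[of _ "vietoris_box seq_fan Vs"]) auto
qed

theorem proposition3p8:
  fixes X :: "'a topology"
  assumes "regular_space X" and "Hausdorff_space X"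
    and "\<exists>S. closedin X S \<and> subtopology X S homeomorphic_space seq_fan"
  shows "\<exists>T. closedin (F2_topology X) T \<and>
             subtopology (F2_topology X) T homeomorphic_space arens_space"
proof -
  obtain S where S: "closedin X S" "subtopology X S homeomorphic_space seq_fan"
    using assms(3) by blast
  obtain T where T: "closedin (F2_topology X) T"
    "subtopology (F2_topology X) T homeomorphic_space
       subtopology (F2_topology seq_fan) (range arens_to_F2)"
    using closed_subspace_F2_topology_transfer[OF S closedin_range_arens_to_F2] by blast
  have "subtopology (F2_topology seq_fan) (range arens_to_F2) homeomorphic_space arens_space"
    using homeomorphic_map_arens_to_F2 homeomorphic_map_imp_homeomorphic_space
      homeomorphic_space_sym by blast
  with T show ?thesis
    using homeomorphic_space_trans by blast
qed

end
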